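(* There is an absolute constant $C>0$ such that the following holds. Let $\langle\mathcal X,\mathcal C,d,\ell,(x_1,\dots,x_n)\rangle$ be a multiple facility location instance with $\mathcal X=[0,1]$ and $d(x,y)=|x-y|$, let $\epsilon\in(0,1)$, and let $k$ be an integer with $C/\epsilon^2\le k\le n$. Then $$\mathbb E_{S\sim\mathcal U_{k,n}}\big[\textsc{Social-Cost}(\overline y(S))\big]\le\textsc{Social-Opt}+\epsilon .$$
   Context: A multiple facility location instance $\langle\mathcal X,\mathcal C,d,\ell,(x_1,\dots,x_n)\rangle$ consists of a metric space $(\mathcal X,d)$, candidate locations $\mathcal C\subseteq\mathcal X$, a number $\ell\ge1$ of facilities and agent locations $x_1,\dots,x_n\in\mathcal X$. For $y=(y_1,\dots,y_\ell)\in\mathcal C^\ell$, agent $i$'s cost is $\mathrm{Cost}_i(y)=\min_{j\in[\ell]}d(x_i,y_j)$; $\textsc{Social-Cost}(y)=\frac1n\sum_i\mathrm{Cost}_i(y)$, $\textsc{Social-Opt}=\min_{y\in\mathcal C^\ell}\textsc{Social-Cost}(y)$, $\textsc{Panel-Cost}(y,S)=\frac1k\sum_{i\in S}\mathrm{Cost}_i(y)$, and $\overline y(S)\in\arg\min_{y\in\mathcal C^\ell}\textsc{Panel-Cost}(y,S)$ (minimizers assumed to exist). $\mathcal U_{k,n}$ is the uniform distribution over size-$k$ subsets of $[n]$. *)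

theory Defs
  imports Complex_Main
begin

text \<open>Agents are indexed by {..<n}, locations x :: nat => real;
  a facility profile y in C^l is a function y :: nat => real with y j in C for j < l.\<close>

definition profiles :: "real set \<Rightarrow> nat \<Rightarrow> (nat \<Rightarrow> real) set" where
  "profiles Cand l = {y. \<forall>j<l. y j \<in> Cand}"

definition agent_cost :: "nat \<Rightarrow> (nat \<Rightarrow> real) \<Rightarrow> real \<Rightarrow> real" where
  "agent_cost l y xi = Min ((\<lambda>j. \<bar>xi - y j\<bar>) ` {..<l})"

definition social_cost :: "nat \<Rightarrow> (nat \<Rightarrow> real) \<Rightarrow> nat \<Rightarrow> (nat \<Rightarrow> real) \<Rightarrow> real" where
  "social_cost n x l y = (\<Sum>i<n. agent_cost l y (x i)) / real n"

definition social_opt :: "real set \<Rightarrow> nat \<Rightarrow> (nat \<Rightarrow> real) \<Rightarrow> nat \<Rightarrow> real" where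
  "social_opt Cand n x l = (INF y\<in>profiles Cand l. social_cost n x l y)"

definition panel_cost :: "nat \<Rightarrow> nat \<Rightarrow> (nat \<Rightarrow> real) \<Rightarrow> nat set \<Rightarrow> (nat \<Rightarrow> real) \<Rightarrow> real" where
  "panel_cost l k x S y = (\<Sum>i\<in>S. agent_cost l y (x i)) / real k"

definition uniform_subset_expectation :: "nat \<Rightarrow> nat \<Rightarrow> (nat set \<Rightarrow> real) \<Rightarrow> real" where
  "uniform_subset_expectation k n f =
     (\<Sum>S\<in>{S. S \<subseteq> {..<n} \<and> card S = k}. f S) / real (n choose k)"

end

(*
  Each agent cost v \<mapsto> min_j |v - y_j| is 1-Lipschitz. Rounding the agents to the grid of
  mesh 1/M and summing by parts over the grid thresholds b/M bounds the gap between the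
  population mean and a panel mean of such a function by 2/M plus the average over b of
  | |A_b|/n - |A_b \<inter> S|/k |, where A_b is the set of agents above the b-th threshold. For a
  uniformly random k-subset S the count |A_b \<inter> S| is hypergeometric; its first two factorial
  moments give variance at most 1/k for |A_b \<inter> S|/k, hence each gap has expectation at most
  1/sqrt k. The panel cost of a fixed profile is unbiased and the panel optimum beats the social
  optimum on the panel, so the expected social cost of the panel optimum is at most
  OPT + 2/M + 1/sqrt k. Letting M go to infinity and using k \<ge> 1/\<epsilon>^2 gives the claim with C = 1.
*)
theory Submission
  imports Defs "HOL-Analysis.Convex"
begin

section \<open>Uniformly random subsets of fixed size\<close>

lemma card_subsets_containing:
  assumes "finite U" and "T \<subseteq> U" and "card T \<le> k"
  shows "card {S. S \<subseteq> U \<and> card S = k \<and> T \<subseteq> S} = (card U - card T) choose (k - card T)"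
proof -
  have "finite T" using assms finite_subset by blast
  have "bij_betw (\<lambda>R. R \<union> T) {R. R \<subseteq> U - T \<and> card R = k - card T}
          {S. S \<subseteq> U \<and> card S = k \<and> T \<subseteq> S}"
  proof (rule bij_betw_byWitness[where f' = "\<lambda>S. S - T"])
    show "(\<lambda>R. R \<union> T) ` {R. R \<subseteq> U - T \<and> card R = k - card T} \<subseteq> {S. S \<subseteq> U \<and> card S = k \<and> T \<subseteq> S}"
    proof safe
      fix R assume "R \<subseteq> U - T" "card R = k - card T"
      moreover have "finite R" using \<open>R \<subseteq> U - T\<close> \<open>finite U\<close> finite_subset by blast
      ultimately show "card (R \<union> T) = k"
        using \<open>finite T\<close> \<open>card T \<le> k\<close> by (subst card_Un_disjoint) auto
    qed (use \<open>T \<subseteq> U\<close> in auto)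
  qed (use \<open>finite T\<close> in \<open>auto simp: card_Diff_subset\<close>)
  then have "card {S. S \<subseteq> U \<and> card S = k \<and> T \<subseteq> S} = card (U - T) choose (k - card T)"
    using \<open>finite U\<close> by (simp add: n_subsets flip: bij_betw_same_card)
  then show ?thesis using \<open>T \<subseteq> U\<close> \<open>finite T\<close> by (simp add: card_Diff_subset)
qed

lemma real_square_eq_plus_choose_two: "(real m)\<^sup>2 = real m + 2 * real (m choose 2)"
proof (induction m)
  case (Suc m)
  have "Suc m choose 2 = (m choose 2) + m"
    by (simp add: numeral_2_eq_2)
  then show ?case using Suc by (simp add: power2_eq_square algebra_simps)
qed simp

lemma choose_two_ratio_le:
  assumes "m \<le> n"
  shows "real (m choose 2) / real (n choose 2) \<le> (real m / real n)\<^sup>2"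
proof (cases "n < 2")
  case False
  have cm: "real (m choose 2) = (real m * real m - real m) / 2"
    using real_square_eq_plus_choose_two[of m] by (simp add: power2_eq_square)
  have cn: "real (n choose 2) = (real n * real n - real n) / 2"
    using real_square_eq_plus_choose_two[of n] by (simp add: power2_eq_square)
  have "real m * (real m * real n) \<le> real n * (real m * real n)"
    using assms by (intro mult_right_mono) auto
  then have "real (m choose 2) * (real n)\<^sup>2 \<le> (real m)\<^sup>2 * real (n choose 2)"
    unfolding cm cn by (simp add: power2_eq_square field_simps)
  moreover have "real (n choose 2) > 0" using False by simp
  ultimately show ?thesis
    using False by (simp add: power_divide pos_divide_le_eq field_simps)
qed (simp add: binomial_eq_0) \<comment> \<open>for \<open>n < 2\<close> the left-hand side is \<open>0 / 0 = 0\<close>\<close>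

lemma uniform_subset_expectation_cong:
  assumes "\<And>S. S \<subseteq> {..<n} \<Longrightarrow> card S = k \<Longrightarrow> f S = g S"
  shows "uniform_subset_expectation k n f = uniform_subset_expectation k n g"
  unfolding uniform_subset_expectation_def using assms by (intro arg_cong2[where f = divide] sum.cong) auto

lemma uniform_subset_expectation_mono:
  assumes "\<And>S. S \<subseteq> {..<n} \<Longrightarrow> card S = k \<Longrightarrow> f S \<le> g S"
  shows "uniform_subset_expectation k n f \<le> uniform_subset_expectation k n g"
  unfolding uniform_subset_expectation_def using assms by (intro divide_right_mono sum_mono) auto

lemma uniform_subset_expectation_add:
  "uniform_subset_expectation k n (\<lambda>S. f S + g S) =
     uniform_subset_expectation k n f + uniform_subset_expectation k n g"
  unfolding uniform_subset_expectation_def by (simp add: sum.distrib add_divide_distrib)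

lemma uniform_subset_expectation_sum:
  "uniform_subset_expectation k n (\<lambda>S. \<Sum>b\<in>B. f b S) = (\<Sum>b\<in>B. uniform_subset_expectation k n (f b))"
  unfolding uniform_subset_expectation_def by (simp add: sum.swap[of _ B] sum_divide_distrib)

lemma uniform_subset_expectation_mult_left:
  "uniform_subset_expectation k n (\<lambda>S. c * f S) = c * uniform_subset_expectation k n f"
  unfolding uniform_subset_expectation_def by (simp add: sum_distrib_left)

lemma uniform_subset_expectation_divide:
  "uniform_subset_expectation k n (\<lambda>S. f S / c) = uniform_subset_expectation k n f / c"
  unfolding uniform_subset_expectation_def by (simp add: sum_divide_distrib[symmetric])

lemma uniform_subset_expectation_const:
  assumes "k \<le> n"
  shows "uniform_subset_expectation k n (\<lambda>S. c) = c"
  unfolding uniform_subset_expectation_def using assms by (simp add: n_subsets)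

lemma uniform_subset_expectation_square_diff:
  assumes "k \<le> n"
  shows "uniform_subset_expectation k n (\<lambda>S. (f S - c)\<^sup>2) =
           uniform_subset_expectation k n (\<lambda>S. (f S)\<^sup>2) - 2 * c * uniform_subset_expectation k n f + c\<^sup>2"
proof -
  have "(\<lambda>S. (f S - c)\<^sup>2) = (\<lambda>S. (f S)\<^sup>2 + ((- 2 * c) * f S + c\<^sup>2))"
    by (simp add: fun_eq_iff power2_diff)
  then show ?thesis
    by (simp only: uniform_subset_expectation_add uniform_subset_expectation_mult_left
        uniform_subset_expectation_const[OF assms])
qed

lemma uniform_subset_expectation_abs_le_sqrt:
  assumes "k \<le> n"
  shows "uniform_subset_expectation k n (\<lambda>S. \<bar>f S\<bar>) \<le> sqrt (uniform_subset_expectation k n (\<lambda>S. (f S)\<^sup>2))"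
proof -
  let ?U = "{S. S \<subseteq> {..<n} \<and> card S = k}"
  have N: "real (card ?U) = real (n choose k)" "real (n choose k) > 0"
    using assms by (simp_all add: n_subsets)
  have "(\<Sum>S\<in>?U. \<bar>f S\<bar>)\<^sup>2 \<le> (\<Sum>S\<in>?U. (f S)\<^sup>2) * real (n choose k)"
    using sum_squared_le_sum_of_squares[of "\<lambda>S. \<bar>f S\<bar>" ?U] N by simp
  then have "(uniform_subset_expectation k n (\<lambda>S. \<bar>f S\<bar>))\<^sup>2 \<le> uniform_subset_expectation k n (\<lambda>S. (f S)\<^sup>2)"
    using N unfolding uniform_subset_expectation_def by (simp add: power_divide field_simps power2_eq_square)
  then show ?thesis by (rule real_le_rsqrt)
qed

lemma uniform_subset_expectation_superset_indicator:
  assumes "T \<subseteq> {..<n}" and "k \<le> n"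
  shows "uniform_subset_expectation k n (\<lambda>S. of_bool (T \<subseteq> S)) = real (k choose card T) / real (n choose card T)"
proof (cases "card T \<le> k")
  case True
  have "(\<Sum>S | S \<subseteq> {..<n} \<and> card S = k. of_bool (T \<subseteq> S) :: real) =
          real (card {S. S \<subseteq> {..<n} \<and> card S = k \<and> T \<subseteq> S})"
    by (simp add: sum.inter_filter[symmetric] Collect_conj_eq Int_assoc)
  also have "\<dots> = real ((n - card T) choose (k - card T))"
    using card_subsets_containing[of "{..<n}" T k] assms True by simp
  finally show ?thesis
    using choose_mult[OF True assms(2)] assms True
    unfolding uniform_subset_expectation_def
    by (simp add: field_simps flip: of_nat_mult)
next
  case False
  have "\<not> T \<subseteq> S" if "S \<subseteq> {..<n}" and "card S = k" for S
    using False that card_mono[of S T] finite_subset[of S "{..<n}"] by auto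
  then show ?thesis using False unfolding uniform_subset_expectation_def by simp
qed

lemma uniform_subset_expectation_sum_elements:
  assumes "k \<le> n"
  shows "uniform_subset_expectation k n (\<lambda>S. \<Sum>i\<in>S. c i) = real k / real n * (\<Sum>i<n. c i)"
proof -
  have "uniform_subset_expectation k n (\<lambda>S. \<Sum>i\<in>S. c i) =
          uniform_subset_expectation k n (\<lambda>S. \<Sum>i<n. c i * of_bool ({i} \<subseteq> S))"
  proof (rule uniform_subset_expectation_cong)
    fix S :: "nat set" assume "S \<subseteq> {..<n}"
    then have "{..<n} \<inter> {i. i \<in> S} = S" by auto
    then show "(\<Sum>i\<in>S. c i) = (\<Sum>i<n. c i * of_bool ({i} \<subseteq> S))"
      by (simp add: sum_mult_of_bool_eq)
  qed
  also have "\<dots> = (\<Sum>i<n. c i * uniform_subset_expectation k n (\<lambda>S. of_bool ({i} \<subseteq> S)))"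
    by (simp only: uniform_subset_expectation_sum uniform_subset_expectation_mult_left)
  also have "\<dots> = (\<Sum>i<n. c i * (real k / real n))"
  proof (rule sum.cong)
    fix i assume "i \<in> {..<n}"
    then show "c i * uniform_subset_expectation k n (\<lambda>S. of_bool ({i} \<subseteq> S)) = c i * (real k / real n)"
      using uniform_subset_expectation_superset_indicator[of "{i}" n k] assms by simp
  qed simp
  finally show ?thesis by (simp only: sum_distrib_right[symmetric] mult.commute)
qed

lemma uniform_subset_expectation_choose_card_Int:
  assumes "A \<subseteq> {..<n}" and "k \<le> n"
  shows "uniform_subset_expectation k n (\<lambda>S. real (card (A \<inter> S) choose t)) =
           real (card A choose t) * real (k choose t) / real (n choose t)"
proof -
  let ?T = "{T. T \<subseteq> A \<and> card T = t}"
  have "finite A" using finite_subset[OF assms(1)] by simp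
  have "finite ?T" by (rule finite_subset[of _ "Pow A"]) (use \<open>finite A\<close> in auto)
  have count: "real (card (A \<inter> S) choose t) = (\<Sum>T\<in>?T. of_bool (T \<subseteq> S))" for S
  proof -
    have "(\<Sum>T\<in>?T. of_bool (T \<subseteq> S)) = real (card (?T \<inter> {T. T \<subseteq> S}))"
      using \<open>finite ?T\<close> by (simp add: sum_of_bool_eq)
    also have "?T \<inter> {T. T \<subseteq> S} = {T. T \<subseteq> A \<inter> S \<and> card T = t}" by auto
    also have "card \<dots> = card (A \<inter> S) choose t" by (rule n_subsets) (use \<open>finite A\<close> in simp)
    finally show ?thesis by (rule sym)
  qed
  have "uniform_subset_expectation k n (\<lambda>S. real (card (A \<inter> S) choose t)) =
          (\<Sum>T\<in>?T. uniform_subset_expectation k n (\<lambda>S. of_bool (T \<subseteq> S)))"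
    by (simp only: count uniform_subset_expectation_sum)
  also have "\<dots> = (\<Sum>T\<in>?T. real (k choose t) / real (n choose t))"
    using assms by (intro sum.cong) (auto simp: uniform_subset_expectation_superset_indicator)
  finally show ?thesis using \<open>finite A\<close> by (simp add: n_subsets)
qed

lemma uniform_subset_expectation_card_Int:
  assumes "A \<subseteq> {..<n}" and "k \<le> n"
  shows "uniform_subset_expectation k n (\<lambda>S. real (card (A \<inter> S))) = real (card A) * real k / real n"
  using uniform_subset_expectation_choose_card_Int[OF assms, of 1] by simp

lemma uniform_subset_expectation_card_Int_square:
  assumes "A \<subseteq> {..<n}" and "k \<le> n"
  shows "uniform_subset_expectation k n (\<lambda>S. (real (card (A \<inter> S)))\<^sup>2) =
           real (card A) * real k / real n +
           2 * (real (card A choose 2) * real (k choose 2) / real (n choose 2))"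
  by (simp only: real_square_eq_plus_choose_two uniform_subset_expectation_add
      uniform_subset_expectation_mult_left uniform_subset_expectation_card_Int[OF assms]
      uniform_subset_expectation_choose_card_Int[OF assms])

lemma hypergeometric_variance_le:
  assumes "A \<subseteq> {..<n}" and "1 \<le> k" and "k \<le> n"
  shows "uniform_subset_expectation k n (\<lambda>S. (real (card (A \<inter> S)) / real k - real (card A) / real n)\<^sup>2)
           \<le> 1 / real k"
proof -
  define p where "p = real (card A) / real n"
  have "card A \<le> n" using card_mono[OF finite_lessThan assms(1)] by simp
  have "real n > 0" and "real k > 0" using assms by auto
  have "real (card A choose 2) / real (n choose 2) * (2 * real (k choose 2)) \<le> p\<^sup>2 * (real k)\<^sup>2"
  proof (rule mult_mono)
    show "real (card A choose 2) / real (n choose 2) \<le> p\<^sup>2"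
      using choose_two_ratio_le[OF \<open>card A \<le> n\<close>] by (simp add: p_def)
    show "2 * real (k choose 2) \<le> (real k)\<^sup>2"
      using real_square_eq_plus_choose_two[of k] by simp
  qed auto
  moreover have "real (card A) * real k / real n \<le> real k"
    using \<open>card A \<le> n\<close> \<open>real n > 0\<close> by (simp add: pos_divide_le_eq mult.commute[of "real k"] mult_right_mono)
  ultimately have second_moment:
    "uniform_subset_expectation k n (\<lambda>S. (real (card (A \<inter> S)))\<^sup>2) \<le> real k + p\<^sup>2 * (real k)\<^sup>2"
    unfolding uniform_subset_expectation_card_Int_square[OF assms(1,3)] by (simp add: mult.left_commute)
  have "uniform_subset_expectation k n (\<lambda>S. (real (card (A \<inter> S)) / real k - p)\<^sup>2) =
          uniform_subset_expectation k n (\<lambda>S. (real (card (A \<inter> S)) / real k)\<^sup>2)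
          - 2 * p * uniform_subset_expectation k n (\<lambda>S. real (card (A \<inter> S)) / real k) + p\<^sup>2"
    by (rule uniform_subset_expectation_square_diff[OF assms(3)])
  also have "uniform_subset_expectation k n (\<lambda>S. (real (card (A \<inter> S)) / real k)\<^sup>2) =
               uniform_subset_expectation k n (\<lambda>S. (real (card (A \<inter> S)))\<^sup>2) / (real k)\<^sup>2"
    by (simp only: power_divide uniform_subset_expectation_divide)
  also have "uniform_subset_expectation k n (\<lambda>S. real (card (A \<inter> S)) / real k) = p"
    using \<open>real k > 0\<close>
    by (simp add: uniform_subset_expectation_divide uniform_subset_expectation_card_Int[OF assms(1,3)] p_def)
  finally have "uniform_subset_expectation k n (\<lambda>S. (real (card (A \<inter> S)) / real k - p)\<^sup>2) =
                  uniform_subset_expectation k n (\<lambda>S. (real (card (A \<inter> S)))\<^sup>2) / (real k)\<^sup>2 - p\<^sup>2"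
    by (simp add: power2_eq_square)
  also have "\<dots> \<le> (real k + p\<^sup>2 * (real k)\<^sup>2) / (real k)\<^sup>2 - p\<^sup>2"
    using second_moment by (simp add: divide_right_mono)
  also have "\<dots> = 1 / real k"
    using \<open>real k > 0\<close> by (simp add: power2_eq_square add_divide_distrib)
  finally show ?thesis by (simp only: p_def)
qed

lemma hypergeometric_abs_deviation_le:
  assumes "A \<subseteq> {..<n}" and "1 \<le> k" and "k \<le> n"
  shows "uniform_subset_expectation k n (\<lambda>S. \<bar>real (card A) / real n - real (card (A \<inter> S)) / real k\<bar>)
           \<le> 1 / sqrt (real k)"
proof -
  have "uniform_subset_expectation k n (\<lambda>S. \<bar>real (card A) / real n - real (card (A \<inter> S)) / real k\<bar>) =
          uniform_subset_expectation k n (\<lambda>S. \<bar>real (card (A \<inter> S)) / real k - real (card A) / real n\<bar>)"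
    by (simp only: abs_minus_commute)
  also have "\<dots> \<le> sqrt (1 / real k)"
    using uniform_subset_expectation_abs_le_sqrt[OF assms(3)] hypergeometric_variance_le[OF assms]
    by (meson order_trans real_sqrt_le_iff)
  finally show ?thesis by (simp add: real_sqrt_divide)
qed

section \<open>Lipschitz functions on a grid\<close>

lemma mult_le_abs_bound:
  fixes a b c :: real
  assumes "\<bar>a\<bar> \<le> c"
  shows "a * b \<le> c * \<bar>b\<bar>"
proof -
  have "a * b \<le> \<bar>a\<bar> * \<bar>b\<bar>" by (simp flip: abs_mult)
  also have "\<dots> \<le> c * \<bar>b\<bar>" using assms by (rule mult_right_mono) simp
  finally show ?thesis .
qed

lemma sum_layer_cake:
  fixes F :: "nat \<Rightarrow> 'a::comm_ring"
  assumes "finite I" and "\<And>i. i \<in> I \<Longrightarrow> \<beta> i \<le> M"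
  shows "(\<Sum>i\<in>I. F (\<beta> i) * \<nu> i) =
           F 0 * (\<Sum>i\<in>I. \<nu> i) + (\<Sum>b<M. (F (Suc b) - F b) * sum \<nu> {i \<in> I. b < \<beta> i})"
proof -
  have telescope: "F (\<beta> i) = F 0 + (\<Sum>b<M. if b < \<beta> i then F (Suc b) - F b else 0)" if "i \<in> I" for i
  proof -
    have "{b \<in> {..<M}. b < \<beta> i} = {..<\<beta> i}" using assms(2)[OF that] by auto
    then show ?thesis
      using sum_lessThan_telescope[of F "\<beta> i"] by (simp flip: sum.inter_filter)
  qed
  have "(\<Sum>i\<in>I. F (\<beta> i) * \<nu> i) =
          (\<Sum>i\<in>I. F 0 * \<nu> i + (\<Sum>b<M. if b < \<beta> i then (F (Suc b) - F b) * \<nu> i else 0))"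
    by (rule sum.cong) (auto simp: telescope distrib_right sum_distrib_right intro!: sum.cong)
  also have "\<dots> = F 0 * (\<Sum>i\<in>I. \<nu> i) + (\<Sum>b<M. \<Sum>i\<in>I. if b < \<beta> i then (F (Suc b) - F b) * \<nu> i else 0)"
    by (simp add: sum.distrib sum_distrib_left sum.swap[of _ I])
  also have "\<dots> = F 0 * (\<Sum>i\<in>I. \<nu> i) + (\<Sum>b<M. (F (Suc b) - F b) * sum \<nu> {i \<in> I. b < \<beta> i})"
    using assms(1) by (auto simp: sum.inter_filter sum_distrib_left intro!: sum.cong)
  finally show ?thesis .
qed

lemma lipschitz_weighted_sum_le:
  fixes h :: "real \<Rightarrow> real" and \<nu> :: "'i \<Rightarrow> real"
  assumes "finite I" and "0 < M"
    and lipschitz: "\<And>v w. \<bar>h v - h w\<bar> \<le> \<bar>v - w\<bar>"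
    and grid_le: "\<And>i. i \<in> I \<Longrightarrow> \<beta> i \<le> M"
    and grid_approx: "\<And>i. i \<in> I \<Longrightarrow> \<bar>x i - real (\<beta> i) / real M\<bar> \<le> 1 / real M"
    and balanced: "(\<Sum>i\<in>I. \<nu> i) = 0"
  shows "(\<Sum>i\<in>I. h (x i) * \<nu> i) \<le>
           ((\<Sum>i\<in>I. \<bar>\<nu> i\<bar>) + (\<Sum>b<M. \<bar>sum \<nu> {i \<in> I. b < \<beta> i}\<bar>)) / real M"
proof -
  define F where "F b = h (real b / real M)" for b
  have rounding: "(\<Sum>i\<in>I. (h (x i) - F (\<beta> i)) * \<nu> i) \<le> (\<Sum>i\<in>I. \<bar>\<nu> i\<bar>) / real M"
  proof -
    have "(\<Sum>i\<in>I. (h (x i) - F (\<beta> i)) * \<nu> i) \<le> (\<Sum>i\<in>I. 1 / real M * \<bar>\<nu> i\<bar>)"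
    proof (rule sum_mono, rule mult_le_abs_bound)
      fix i assume "i \<in> I"
      show "\<bar>h (x i) - F (\<beta> i)\<bar> \<le> 1 / real M"
        using lipschitz[of "x i"] grid_approx[OF \<open>i \<in> I\<close>] unfolding F_def by (rule order_trans)
    qed
    then show ?thesis by (simp add: sum_divide_distrib)
  qed
  have "(\<Sum>i\<in>I. F (\<beta> i) * \<nu> i) = (\<Sum>b<M. (F (Suc b) - F b) * sum \<nu> {i \<in> I. b < \<beta> i})"
    using sum_layer_cake[OF \<open>finite I\<close> grid_le, where F = F and \<nu> = \<nu>] balanced by simp
  also have "\<dots> \<le> (\<Sum>b<M. 1 / real M * \<bar>sum \<nu> {i \<in> I. b < \<beta> i}\<bar>)"
  proof (rule sum_mono, rule mult_le_abs_bound)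
    fix b
    have "\<bar>real (Suc b) / real M - real b / real M\<bar> = 1 / real M"
      using \<open>0 < M\<close> by (simp add: diff_divide_distrib[symmetric])
    then show "\<bar>F (Suc b) - F b\<bar> \<le> 1 / real M"
      using lipschitz unfolding F_def by metis
  qed
  finally have layers: "(\<Sum>i\<in>I. F (\<beta> i) * \<nu> i) \<le> (\<Sum>b<M. \<bar>sum \<nu> {i \<in> I. b < \<beta> i}\<bar>) / real M"
    by (simp add: sum_divide_distrib)
  have "(\<Sum>i\<in>I. h (x i) * \<nu> i) = (\<Sum>i\<in>I. F (\<beta> i) * \<nu> i) + (\<Sum>i\<in>I. (h (x i) - F (\<beta> i)) * \<nu> i)"
    by (simp add: left_diff_distrib sum_subtractf)
  then show ?thesis using rounding layers by (simp add: add_divide_distrib)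
qed

lemma nat_ceiling_grid:
  fixes x :: real
  assumes "x \<in> {0..1}" and "0 < M"
  shows "nat \<lceil>x * real M\<rceil> \<le> M" and "\<bar>x - real (nat \<lceil>x * real M\<rceil>) / real M\<bar> \<le> 1 / real M"
proof -
  have "x * real M \<le> real M" using assms by (simp add: mult_left_le_one_le)
  then show "nat \<lceil>x * real M\<rceil> \<le> M" by (simp add: nat_le_iff ceiling_le_iff)
  have "real (nat \<lceil>x * real M\<rceil>) = of_int \<lceil>x * real M\<rceil>" using assms by simp
  then have "\<bar>x * real M - real (nat \<lceil>x * real M\<rceil>)\<bar> \<le> 1"
    using ceiling_correct[of "x * real M"] by linarith
  moreover have "x - real (nat \<lceil>x * real M\<rceil>) / real M = (x * real M - real (nat \<lceil>x * real M\<rceil>)) / real M"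
    using assms by (simp add: field_simps)
  ultimately show "\<bar>x - real (nat \<lceil>x * real M\<rceil>) / real M\<bar> \<le> 1 / real M"
    by (simp add: divide_right_mono)
qed

lemma mean_minus_sample_mean_le:
  fixes h :: "real \<Rightarrow> real"
  assumes lipschitz: "\<And>v w. \<bar>h v - h w\<bar> \<le> \<bar>v - w\<bar>"
    and x: "\<forall>i<n. x i \<in> {0..1}"
    and S: "S \<subseteq> {..<n}" "card S = k" and "1 \<le> k" and "0 < M"
  defines "A b \<equiv> {i. i < n \<and> b < nat \<lceil>x i * real M\<rceil>}"
  shows "(\<Sum>i<n. h (x i)) / real n - (\<Sum>i\<in>S. h (x i)) / real k \<le>
           (2 + (\<Sum>b<M. \<bar>real (card (A b)) / real n - real (card (A b \<inter> S)) / real k\<bar>)) / real M"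
proof -
  define \<nu> where "\<nu> i = 1 / real n - of_bool (i \<in> S) / real k" for i
  have "k \<le> n" using card_mono[OF finite_lessThan S(1)] S(2) by simp
  then have "real n > 0" and "real k > 0" using \<open>1 \<le> k\<close> by auto
  have count: "(\<Sum>i\<in>T. of_bool (i \<in> S) :: real) = real (card (T \<inter> S))" if "finite T" for T
    using that by (simp add: sum_of_bool_eq Collect_mem_eq)
  have "{..<n} \<inter> S = S" using S(1) by auto
  then have count_S: "(\<Sum>i<n. of_bool (i \<in> S) :: real) = real k"
    using count[of "{..<n}"] S(2) by simp
  have balanced: "(\<Sum>i<n. \<nu> i) = 0"
    using count_S \<open>real n > 0\<close> \<open>real k > 0\<close>
    by (simp add: \<nu>_def sum_subtractf sum_divide_distrib[symmetric])
  have total_variation: "(\<Sum>i<n. \<bar>\<nu> i\<bar>) \<le> 2"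
  proof -
    have "(\<Sum>i<n. \<bar>\<nu> i\<bar>) \<le> (\<Sum>i<n. 1 / real n + of_bool (i \<in> S) / real k)"
      using \<open>real n > 0\<close> \<open>real k > 0\<close> by (intro sum_mono) (simp add: \<nu>_def abs_le_iff)
    also have "\<dots> = 2"
      using count_S \<open>real n > 0\<close> \<open>real k > 0\<close> by (simp add: sum.distrib sum_divide_distrib[symmetric])
    finally show ?thesis .
  qed
  have thresholds: "sum \<nu> {i \<in> {..<n}. b < nat \<lceil>x i * real M\<rceil>} =
                      real (card (A b)) / real n - real (card (A b \<inter> S)) / real k" for b
    using count[of "A b"] unfolding A_def
    by (simp add: \<nu>_def sum_subtractf sum_divide_distrib[symmetric])
  have "(\<Sum>i<n. h (x i) * \<nu> i) \<le>
          ((\<Sum>i<n. \<bar>\<nu> i\<bar>) + (\<Sum>b<M. \<bar>sum \<nu> {i \<in> {..<n}. b < nat \<lceil>x i * real M\<rceil>}\<bar>)) / real M"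
    using x nat_ceiling_grid[OF _ \<open>0 < M\<close>] balanced
    by (intro lipschitz_weighted_sum_le[OF finite_lessThan \<open>0 < M\<close> lipschitz]) auto
  also have "\<dots> \<le> (2 + (\<Sum>b<M. \<bar>real (card (A b)) / real n - real (card (A b \<inter> S)) / real k\<bar>)) / real M"
    using total_variation \<open>0 < M\<close> unfolding thresholds by (simp add: divide_right_mono)
  finally have weighted: "(\<Sum>i<n. h (x i) * \<nu> i) \<le> \<dots>" .
  have "(\<Sum>i<n. h (x i) * \<nu> i) = (\<Sum>i<n. h (x i) / real n - h (x i) / real k * of_bool (i \<in> S))"
    by (simp add: \<nu>_def right_diff_distrib)
  also have "\<dots> = (\<Sum>i<n. h (x i)) / real n - (\<Sum>i\<in>S. h (x i)) / real k"
    by (simp only: sum_subtractf sum_divide_distrib[symmetric] sum_mult_of_bool_eq[OF finite_lessThan]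
        Collect_mem_eq \<open>{..<n} \<inter> S = S\<close>)
  finally show ?thesis using weighted by simp
qed

section \<open>Panels for facility location on the unit interval\<close>

lemma agent_cost_lipschitz:
  assumes "1 \<le> l"
  shows "\<bar>agent_cost l y v - agent_cost l y w\<bar> \<le> \<bar>v - w\<bar>"
proof -
  have one_sided: "agent_cost l y v \<le> agent_cost l y w + \<bar>v - w\<bar>" for v w
  proof -
    have "agent_cost l y w \<in> (\<lambda>j. \<bar>w - y j\<bar>) ` {..<l}"
      unfolding agent_cost_def using assms by (intro Min_in) (auto simp: lessThan_empty_iff)
    then obtain j where "j < l" and j: "agent_cost l y w = \<bar>w - y j\<bar>" by auto
    then have "agent_cost l y v \<le> \<bar>v - y j\<bar>" unfolding agent_cost_def by (intro Min_le) auto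
    then show ?thesis using j by linarith
  qed
  show ?thesis using one_sided[of v w] one_sided[of w v] by (simp add: abs_le_iff abs_minus_commute)
qed

lemma uniform_subset_expectation_panel_cost:
  assumes "1 \<le> k" and "k \<le> n"
  shows "uniform_subset_expectation k n (\<lambda>S. panel_cost l k x S y) = social_cost n x l y"
  using assms unfolding panel_cost_def social_cost_def
  by (simp add: uniform_subset_expectation_divide uniform_subset_expectation_sum_elements)

lemma social_opt_eq_minimum:
  assumes "y \<in> profiles Cand l" and "\<forall>y'\<in>profiles Cand l. social_cost n x l y \<le> social_cost n x l y'"
  shows "social_opt Cand n x l = social_cost n x l y"
  unfolding social_opt_def by (rule cInf_eq_minimum) (use assms in auto)

lemma expected_social_cost_le:
  assumes "1 \<le> l" and x: "\<forall>i<n. x i \<in> {0..1}" and "1 \<le> k" and "k \<le> n"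
    and panel_optimal: "\<And>S. S \<subseteq> {..<n} \<Longrightarrow> card S = k \<Longrightarrow>
                          panel_cost l k x S (ybar S) \<le> panel_cost l k x S y"
  shows "uniform_subset_expectation k n (\<lambda>S. social_cost n x l (ybar S)) \<le>
           social_cost n x l y + 1 / sqrt (real k)"
proof (rule field_le_epsilon)
  fix e :: real assume "0 < e"
  obtain M :: nat where "2 / e < real M" using reals_Archimedean2 by blast
  moreover have "0 < 2 / e" using \<open>0 < e\<close> by simp
  ultimately have "0 < M" by linarith
  have "2 / real M < e" using \<open>2 / e < real M\<close> \<open>0 < e\<close> \<open>0 < M\<close> by (simp add: field_simps)
  define A where "A b = {i. i < n \<and> b < nat \<lceil>x i * real M\<rceil>}" for b
  define D where "D b S = \<bar>real (card (A b)) / real n - real (card (A b \<inter> S)) / real k\<bar>" for b S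
  have "uniform_subset_expectation k n (\<lambda>S. social_cost n x l (ybar S)) \<le>
          uniform_subset_expectation k n (\<lambda>S. panel_cost l k x S y + (2 + (\<Sum>b<M. D b S)) / real M)"
  proof (rule uniform_subset_expectation_mono)
    fix S assume S: "S \<subseteq> {..<n}" "card S = k"
    have "social_cost n x l (ybar S) - panel_cost l k x S (ybar S) \<le> (2 + (\<Sum>b<M. D b S)) / real M"
      unfolding social_cost_def panel_cost_def D_def A_def
      using agent_cost_lipschitz[OF \<open>1 \<le> l\<close>] x S \<open>1 \<le> k\<close> \<open>0 < M\<close>
      by (intro mean_minus_sample_mean_le)
    then show "social_cost n x l (ybar S) \<le> panel_cost l k x S y + (2 + (\<Sum>b<M. D b S)) / real M"
      using panel_optimal[OF S] by simp
  qed
  also have "\<dots> = social_cost n x l y + (2 + (\<Sum>b<M. uniform_subset_expectation k n (D b))) / real M"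
    using assms by (simp add: uniform_subset_expectation_add uniform_subset_expectation_divide
        uniform_subset_expectation_const uniform_subset_expectation_sum uniform_subset_expectation_panel_cost)
  also have "\<dots> \<le> social_cost n x l y + (2 + real M * (1 / sqrt (real k))) / real M"
  proof -
    have "uniform_subset_expectation k n (D b) \<le> 1 / sqrt (real k)" for b
      unfolding D_def by (rule hypergeometric_abs_deviation_le) (use assms in \<open>auto simp: A_def\<close>)
    then have "(\<Sum>b<M. uniform_subset_expectation k n (D b)) \<le> (\<Sum>b<M. 1 / sqrt (real k))"
      by (rule sum_mono)
    then have "(\<Sum>b<M. uniform_subset_expectation k n (D b)) \<le> real M * (1 / sqrt (real k))"
      by simp
    then show ?thesis using \<open>0 < M\<close> by (simp add: divide_right_mono)
  qed
  also have "\<dots> = social_cost n x l y + 1 / sqrt (real k) + 2 / real M"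
    using \<open>0 < M\<close> by (simp add: field_simps)
  finally show "uniform_subset_expectation k n (\<lambda>S. social_cost n x l (ybar S)) \<le>
                  social_cost n x l y + 1 / sqrt (real k) + e"
    using \<open>2 / real M < e\<close> by linarith
qed

lemma inverse_sqrt_le_of_inverse_square_le:
  fixes \<epsilon> t :: real
  assumes "0 < \<epsilon>" and "1 / \<epsilon>\<^sup>2 \<le> t"
  shows "1 / sqrt t \<le> \<epsilon>"
proof -
  have "0 < 1 / \<epsilon>\<^sup>2" using assms by simp
  then have "0 < t" using assms by linarith
  have "1 / \<epsilon> = sqrt (1 / \<epsilon>\<^sup>2)" using assms by (simp add: real_sqrt_divide)
  also have "\<dots> \<le> sqrt t" using assms by simp
  finally show ?thesis using assms \<open>0 < t\<close> by (simp add: field_simps)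
qed

theorem theorem4p14:
  "\<exists>C>0. \<forall>(Cand :: real set) (l :: nat) (n :: nat) (x :: nat \<Rightarrow> real)
            (\<epsilon> :: real) (k :: nat) (ybar :: nat set \<Rightarrow> (nat \<Rightarrow> real)).
     Cand \<subseteq> {0..1} \<and> l \<ge> 1 \<and> (\<forall>i<n. x i \<in> {0..1}) \<and>
     (\<exists>y\<in>profiles Cand l. \<forall>y'\<in>profiles Cand l. social_cost n x l y \<le> social_cost n x l y') \<and>
     (\<forall>S. S \<subseteq> {..<n} \<and> card S = k \<longrightarrow>
        ybar S \<in> profiles Cand l \<and>
        (\<forall>y\<in>profiles Cand l. panel_cost l k x S (ybar S) \<le> panel_cost l k x S y)) \<and>
     0 < \<epsilon> \<and> \<epsilon> < 1 \<and> C / \<epsilon>\<^sup>2 \<le> real k \<and> k \<le> n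
     \<longrightarrow> uniform_subset_expectation k n (\<lambda>S. social_cost n x l (ybar S))
           \<le> social_opt Cand n x l + \<epsilon>"
proof (intro exI[of _ 1] conjI allI impI, goal_cases)
  case 1
  show ?case by simp
next
  case (2 Cand l n x \<epsilon> k ybar)
  then obtain y where y: "y \<in> profiles Cand l"
    and y_optimal: "\<forall>y'\<in>profiles Cand l. social_cost n x l y \<le> social_cost n x l y'"
    by blast
  from 2 have "0 < \<epsilon>" and k: "1 / \<epsilon>\<^sup>2 \<le> real k" by auto
  moreover have "0 < 1 / \<epsilon>\<^sup>2" using \<open>0 < \<epsilon>\<close> by simp
  ultimately have "0 < real k" by linarith
  then have "1 \<le> k" by simp
  have "uniform_subset_expectation k n (\<lambda>S. social_cost n x l (ybar S)) \<le> social_cost n x l y + 1 / sqrt (real k)"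
  proof (rule expected_social_cost_le)
    show "1 \<le> l" and "\<forall>i<n. x i \<in> {0..1}" and "k \<le> n" using 2 by auto
    show "1 \<le> k" by fact
    fix S assume "S \<subseteq> {..<n}" and "card S = k"
    then show "panel_cost l k x S (ybar S) \<le> panel_cost l k x S y" using 2 y by blast
  qed
  also have "\<dots> \<le> social_opt Cand n x l + \<epsilon>"
    using social_opt_eq_minimum[OF y y_optimal] inverse_sqrt_le_of_inverse_square_le[OF \<open>0 < \<epsilon>\<close> k] by simp
  finally show ?case .
qed

end
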